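(* Let $A=(A(i,j))_{i,j\in\mathbb{N}}$ be an infinite matrix with entries in $\{0,1\}$ such that each row has only finitely many entries equal to $1$, let $(X,\mu)$ be a $\sigma$-finite measure space and let $(\{f_i\}_{i=1}^\infty,\{D_i\}_{i=1}^\infty)$ together with a nonsingular $F:X\to X$ be an $A_\infty$-branching system on $(X,\mu)$. Suppose $\mu(R_i)<\infty$ for each $i$, and suppose each $\Phi_{f_i}$ is a positive constant function on $D_i$, say $\Phi_{f_i}=b_i>0$. Let $W\subseteq L_1(X,\mu)$ be the linear span of $\{\chi_{R_i}:i\in\mathbb{N}\}$ (finite linear combinations). Then $P_F$ maps $W$ into $W$, and the matrix of $P_F|_W:W\to W$ with respect to the family $(\chi_{R_i})_{i\in\mathbb{N}}$ is $A^TB$, where $B$ is the infinite diagonal matrix with $B_{i,i}=b_i$; that is, for every $z\in\mathbb{N}$, $$P_F(\chi_{R_z})=\sum_{j\in\mathbb{N}}(A^TB)_{j,z}\,\chi_{R_j}=\sum_{j:A(z,j)=1}b_z\,\chi_{R_j}.$$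
   Context: Notation: for measurable $Y,Z\subseteq X$, write $Y\stackrel{\mu\text{-a.e.}}{=}Z$ if $\mu(Y\setminus Z)=0=\mu(Z\setminus Y)$. For a measurable map $h$ on a measurable set $W'$, $\mu\circ h$ is the measure $E\mapsto\mu(h(E))$ on $W'$. For finite $U,V\subseteq\mathbb{N}$ and $j\in\mathbb{N}$ put $A(U,V,j)=\prod_{u\in U}A(u,j)\prod_{v\in V}(1-A(v,j))$. A transformation $F$ is nonsingular if $\mu(F^{-1}(E))=0$ whenever $\mu(E)=0$. The Perron-Frobenius operator $P_F:L_1(X,\mu)\to L_1(X,\mu)$ is defined by $\int_E P_F\psi\,d\mu=\int_{F^{-1}(E)}\psi\,d\mu$ for all measurable $E\subseteq X$ and $\psi\in L_1(X,\mu)$. The product $A^TB$ is the ordinary matrix product (well defined since $B$ is diagonal), with $(A^TB)_{j,z}=A(z,j)b_z$. An $A_\infty$-branching system on $(X,\mu)$ is a family $(\{f_i\}_{i=1}^\infty,\{D_i\}_{i=1}^\infty)$ together with a nonsingular transformation $F:X\to X$ such that: (1) $f_i:D_i\to R_i$ is measurable, $D_i,R_i$ are measurable subsets of $X$, and $f_i(D_i)\stackrel{\mu\text{-a.e.}}{=}R_i$ for each $i$; (2) $F\circ f_i=\mathrm{id}_{D_i}$ $\mu$-a.e. on $D_i$ for each $i$; (3) $\mu(R_i\cap R_j)=0$ for $i\neq j$; (4) $\mu(R_j\cap D_i)=0$ if $A(i,j)=0$ and $\mu(R_j\setminus D_i)=0$ if $A(i,j)=1$; (5) for each pair $U,V$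 of finite subsets of $\mathbb{N}$ such that $A(U,V,j)=1$ for only finitely many $j$, $\bigcap_{u\in U}D_u\cap\bigcap_{v\in V}(X\setminus D_v)\stackrel{\mu\text{-a.e.}}{=}\bigcup_{j:A(U,V,j)=1}R_j$; (6) there exist the Radon-Nikodym derivatives $\Phi_{f_i}$ of $\mu\circ f_i$ with respect to $\mu$ on $D_i$ and $\Phi_{f_i^{-1}}$ of $\mu\circ f_i^{-1}$ with respect to $\mu$ on $R_i$, where $f_i^{-1}:=F|_{R_i}$. *)

theory Defs
  imports "HOL-Analysis.Analysis"
begin

definition ae_eq_set :: "'a measure \<Rightarrow> 'a set \<Rightarrow> 'a set \<Rightarrow> bool" where
  "ae_eq_set M Y Z \<longleftrightarrow> Y \<in> sets M \<and> Z \<in> sets M \<and>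
     emeasure M (Y - Z) = 0 \<and> emeasure M (Z - Y) = 0"

definition nonsingular :: "'a measure \<Rightarrow> ('a \<Rightarrow> 'a) \<Rightarrow> bool" where
  "nonsingular M F \<longleftrightarrow> F \<in> measurable M M \<and>
     (\<forall>E\<in>sets M. emeasure M E = 0 \<longrightarrow> emeasure M (F -` E \<inter> space M) = 0)"

definition Aprod :: "(nat \<Rightarrow> nat \<Rightarrow> real) \<Rightarrow> nat set \<Rightarrow> nat set \<Rightarrow> nat \<Rightarrow> real" where
  "Aprod A U V j = (\<Prod>u\<in>U. A u j) * (\<Prod>v\<in>V. 1 - A v j)"

definition is_RN_deriv_on :: "'a measure \<Rightarrow> ('a \<Rightarrow> 'a) \<Rightarrow> 'a set \<Rightarrow> ('a \<Rightarrow> ennreal) \<Rightarrow> bool" where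
  "is_RN_deriv_on M g W h \<longleftrightarrow> h \<in> borel_measurable M \<and>
     (\<forall>E\<in>sets M. E \<subseteq> W \<longrightarrow> g ` E \<in> sets M \<and>
        emeasure M (g ` E) = set_nn_integral M E h)"

definition A_branching_system ::
  "'a measure \<Rightarrow> (nat \<Rightarrow> nat \<Rightarrow> real) \<Rightarrow> (nat \<Rightarrow> 'a \<Rightarrow> 'a) \<Rightarrow> (nat \<Rightarrow> 'a set)
     \<Rightarrow> (nat \<Rightarrow> 'a set) \<Rightarrow> ('a \<Rightarrow> 'a) \<Rightarrow> bool" where
  "A_branching_system M A f D R F \<longleftrightarrow>
     nonsingular M F \<and>
     (\<forall>i. D i \<in> sets M \<and> R i \<in> sets M \<and> D i \<subseteq> space M \<and> R i \<subseteq> space M \<and>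
          f i \<in> measurable (restrict_space M (D i)) M \<and>
          ae_eq_set M (f i ` D i) (R i)) \<and>
     (\<forall>i. AE x in M. x \<in> D i \<longrightarrow> F (f i x) = x) \<and>
     (\<forall>i j. i \<noteq> j \<longrightarrow> emeasure M (R i \<inter> R j) = 0) \<and>
     (\<forall>i j. A i j = 0 \<longrightarrow> emeasure M (R j \<inter> D i) = 0) \<and>
     (\<forall>i j. A i j = 1 \<longrightarrow> emeasure M (R j - D i) = 0) \<and>
     (\<forall>U V. finite U \<and> finite V \<and> finite {j. Aprod A U V j = 1} \<longrightarrow>
        ae_eq_set M (space M \<inter> (\<Inter>u\<in>U. D u) \<inter> (\<Inter>v\<in>V. space M - D v))
                    (\<Union>j\<in>{j. Aprod A U V j = 1}. R j)) \<and>
     (\<forall>i. (\<exists>\<Phi>. is_RN_deriv_on M (f i) (D i) \<Phi>) \<and> (\<exists>\<Psi>. is_RN_deriv_on M F (R i) \<Psi>))"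

text \<open>phi is (a representative of) the Perron-Frobenius image P_F psi in L_1(X,mu).\<close>
definition is_PF_image :: "'a measure \<Rightarrow> ('a \<Rightarrow> 'a) \<Rightarrow> ('a \<Rightarrow> real) \<Rightarrow> ('a \<Rightarrow> real) \<Rightarrow> bool" where
  "is_PF_image M F psi phi \<longleftrightarrow> integrable M phi \<and>
     (\<forall>E\<in>sets M. (LINT x:E|M. phi x) = (LINT x:(F -` E \<inter> space M)|M. psi x))"

definition chi_span :: "(nat \<Rightarrow> 'a set) \<Rightarrow> ('a \<Rightarrow> real) set" where
  "chi_span R = {(\<lambda>x. \<Sum>i\<in>I. c i * indicator (R i) x) | I c. finite I}"

end

theory Submission imports Defs begin

text \<open>\<open>F\<close> inverts each branch \<open>f z\<close> almost everywhere, so \<open>F\<^sup>-\<^sup>1(E) \<inter> R z\<close> agrees up to a null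
  set with \<open>f z ` (E \<inter> D z)\<close>, whose measure is \<open>b z \<cdot> \<mu>(E \<inter> D z)\<close> because the Jacobian of \<open>f z\<close>
  is constant. Up to null sets \<open>D z\<close> is the almost disjoint union of the \<open>R j\<close> with
  \<open>A z j = 1\<close>, so this equals \<open>\<Sum>\<^sub>j b z \<cdot> \<mu>(E \<inter> R j) = \<integral>\<^sub>E \<Sum>\<^sub>j b z \<cdot> \<chi>\<^bsub>R j\<^esub>\<close>, the defining identity
  of \<open>P\<^sub>F \<chi>\<^bsub>R z\<^esub>\<close>. Linearity of \<open>P\<^sub>F\<close> then carries the span of the \<open>\<chi>\<^bsub>R i\<^esub>\<close> into itself.\<close>

lemma AE_mem_iff_of_ae_eq_set:
  assumes "ae_eq_set M Y Z"
  shows "AE x in M. x \<in> Y \<longleftrightarrow> x \<in> Z"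
proof (rule AE_I')
  show "(Y - Z) \<union> (Z - Y) \<in> null_sets M"
    using assms by (auto simp: ae_eq_set_def null_sets_def emeasure_Un_null_set)
qed auto

lemma set_integral_sum:
  fixes f :: "'i \<Rightarrow> 'a \<Rightarrow> real"
  assumes "\<And>i. i \<in> I \<Longrightarrow> set_integrable M A (f i)"
  shows "(LINT x:A|M. \<Sum>i\<in>I. f i x) = (\<Sum>i\<in>I. LINT x:A|M. f i x)"
  using assms unfolding set_lebesgue_integral_def set_integrable_def
  by (simp add: sum_distrib_left integral_sum)

lemma set_integral_indicator:
  assumes "A \<in> sets M"
  shows "(LINT x:A|M. indicator B x) = measure M (A \<inter> B)"
proof -
  have "A \<inter> B \<inter> space M = A \<inter> B"
    using sets.sets_into_space[OF assms] by blast
  then show ?thesis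
    unfolding set_lebesgue_integral_def by (simp add: indicator_inter_arith[symmetric])
qed

lemma emeasure_vimage_Int_eq_scaled:
  assumes D: "D \<in> sets M" "D \<subseteq> space M" and R: "R \<in> sets M"
    and g: "g \<in> measurable (restrict_space M D) M"
    and image: "ae_eq_set M (g ` D) R"
    and left_inverse: "AE x in M. x \<in> D \<longrightarrow> F (g x) = x"
    and jacobian: "is_RN_deriv_on M g D (\<lambda>_. ennreal c)"
    and E: "E \<in> sets M" and F: "F \<in> measurable M M"
  shows "emeasure M (F -` E \<inter> space M \<inter> R) = c * emeasure M (E \<inter> D)"
proof -
  have scale: "g ` X \<in> sets M \<and> emeasure M (g ` X) = c * emeasure M X"
    if "X \<in> sets M" "X \<subseteq> D" for X
    using jacobian that unfolding is_RN_deriv_on_def by (auto simp: nn_integral_cmult_indicator)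
  have g_space: "g x \<in> space M" if "x \<in> D" for x
    using measurable_space[OF g, of x] that D by (auto simp: space_restrict_space)
  obtain N where N: "N \<in> null_sets M" "{x \<in> space M. \<not> (x \<in> D \<longrightarrow> F (g x) = x)} \<subseteq> N"
    using left_inverse by (auto simp: eventually_ae_filter)
  have "N \<inter> D \<in> null_sets M"
    using null_set_Int2[OF N(1) D(1)] .
  then have "g ` (N \<inter> D) \<in> null_sets M"
    using scale[of "N \<inter> D"] by (auto simp: null_sets_def)
  then have "AE y in M. y \<notin> g ` (N \<inter> D)"
    by (rule AE_not_in)
  moreover have "AE y in M. y \<in> g ` D \<longleftrightarrow> y \<in> R"
    using image by (rule AE_mem_iff_of_ae_eq_set)
  \<comment> \<open>Away from \<open>g ` (N \<inter> D)\<close>, \<open>F\<close> undoes \<open>g\<close>, so \<open>g\<close> maps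
     \<open>E \<inter> D\<close> onto the part of \<open>R\<close> sent into \<open>E\<close>.\<close>
  ultimately have "AE y in M. y \<in> F -` E \<inter> space M \<inter> R \<longleftrightarrow> y \<in> g ` (E \<inter> D)"
  proof eventually_elim
    case (elim y)
    have inverse: "F (g x) = x" if "x \<in> D" "g x = y" for x
      using that elim(1) N(2) D(2) by auto
    show ?case
      using elim inverse g_space by (auto simp: image_iff) (metis IntI)
  qed
  then have "emeasure M (F -` E \<inter> space M \<inter> R) = emeasure M (g ` (E \<inter> D))"
    using E D R F scale[of "E \<inter> D"] by (intro emeasure_eq_AE) auto
  then show ?thesis
    using E D scale[of "E \<inter> D"] by auto
qed

lemma measure_Int_eq_sum_of_ae_eq_Union:
  assumes J: "finite J" and E: "E \<in> sets M" and D: "D \<in> sets M"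
    and R: "\<And>j. j \<in> J \<Longrightarrow> R j \<in> fmeasurable M"
    and cover: "ae_eq_set M (space M \<inter> D) (\<Union>j\<in>J. R j)"
    and almost_disjoint: "\<And>i j. i \<in> J \<Longrightarrow> j \<in> J \<Longrightarrow> i \<noteq> j \<Longrightarrow> emeasure M (R i \<inter> R j) = 0"
  shows "measure M (E \<inter> D) = (\<Sum>j\<in>J. measure M (E \<inter> R j))"
proof -
  have ER: "E \<inter> R j \<in> fmeasurable M" if "j \<in> J" for j
    using fmeasurable_Int_fmeasurable[OF R[OF that] E] by (simp add: Int_commute)
  have "AE x in M. x \<in> E \<inter> D \<longleftrightarrow> x \<in> (\<Union>j\<in>J. E \<inter> R j)"
    using AE_space AE_mem_iff_of_ae_eq_set[OF cover] by eventually_elim auto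
  then have "measure M (E \<inter> D) = measure M (\<Union>j\<in>J. E \<inter> R j)"
    using E D ER J by (intro measure_eq_AE sets.finite_UN) (auto simp: fmeasurable_def)
  also have "\<dots> = (\<Sum>j\<in>J. measure M (E \<inter> R j))"
  proof (rule measure_UNION_AE[OF J ER])
    have "AE x in M. x \<notin> E \<inter> R i \<or> x \<notin> E \<inter> R j" if "i \<in> J" "j \<in> J" "i \<noteq> j" for i j
    proof (rule AE_I')
      show "R i \<inter> R j \<in> null_sets M"
        using R that almost_disjoint[OF that] by (auto simp: fmeasurable_def)
    qed auto
    then show "pairwise (\<lambda>i j. AE x in M. x \<notin> E \<inter> R i \<or> x \<notin> E \<inter> R j) J"
      by (auto simp: pairwise_def)
  qed
  finally show ?thesis .
qed

lemma is_PF_image_indicator_range: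
  assumes bs: "A_branching_system M A f D R F"
    and row: "finite {j. A z j = 1}"
    and R_finite: "\<And>j. A z j = 1 \<Longrightarrow> emeasure M (R j) < \<infinity>"
    and c: "0 \<le> c" and jacobian: "is_RN_deriv_on M (f z) (D z) (\<lambda>_. ennreal c)"
  shows "is_PF_image M F (indicator (R z)) (\<lambda>x. \<Sum>j\<in>{j. A z j = 1}. c * indicator (R j) x)"
proof -
  define J where "J = {j. A z j = 1}"
  have F: "F \<in> measurable M M" and R: "\<And>j. R j \<in> sets M"
    and D: "D z \<in> sets M" "D z \<subseteq> space M"
    and branch: "f z \<in> measurable (restrict_space M (D z)) M" "ae_eq_set M (f z ` D z) (R z)"
      "AE x in M. x \<in> D z \<longrightarrow> F (f z x) = x"
    and almost_disjoint: "\<And>i j. i \<noteq> j \<Longrightarrow> emeasure M (R i \<inter> R j) = 0"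
    using bs by (auto simp: A_branching_system_def nonsingular_def)
  have R_fmeasurable: "R j \<in> fmeasurable M" if "j \<in> J" for j
    using R R_finite that by (auto simp: J_def intro: fmeasurableI)
  have cover_condition: "\<forall>U V. finite U \<and> finite V \<and> finite {j. Aprod A U V j = 1} \<longrightarrow>
      ae_eq_set M (space M \<inter> (\<Inter>u\<in>U. D u) \<inter> (\<Inter>v\<in>V. space M - D v)) (\<Union>j\<in>{j. Aprod A U V j = 1}. R j)"
    using bs unfolding A_branching_system_def by (elim conjE) assumption
  have "{j. Aprod A {z} {} j = 1} = J"
    by (auto simp: Aprod_def J_def)
  then have cover: "ae_eq_set M (space M \<inter> D z) (\<Union>j\<in>J. R j)"
    using cover_condition[rule_format, of "{z}" "{}"] row by (simp add: J_def)
  show ?thesis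
    unfolding is_PF_image_def J_def[symmetric]
  proof (intro conjI ballI)
    show "integrable M (\<lambda>x. \<Sum>j\<in>J. c * indicator (R j) x)"
      using R_fmeasurable by (auto simp: fmeasurable_def)
    fix E assume E: "E \<in> sets M"
    have "(LINT x:E|M. \<Sum>j\<in>J. c * indicator (R j) x) = (\<Sum>j\<in>J. c * measure M (E \<inter> R j))"
    proof (subst set_integral_sum)
      show "set_integrable M E (\<lambda>x. c * indicator (R j) x)" if "j \<in> J" for j
        unfolding set_integrable_def using E R_fmeasurable[OF that]
        by (intro integrable_mult_indicator) (auto simp: fmeasurable_def)
    qed (use E in \<open>simp add: set_integral_indicator\<close>)
    also have "\<dots> = c * measure M (E \<inter> D z)"
      using measure_Int_eq_sum_of_ae_eq_Union[OF _ E D(1) R_fmeasurable cover almost_disjoint] row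
      by (simp add: J_def sum_distrib_left)
    also have "\<dots> = measure M (F -` E \<inter> space M \<inter> R z)"
      using emeasure_vimage_Int_eq_scaled[OF D R branch jacobian E F] c
      by (simp add: measure_def enn2real_mult)
    also have "\<dots> = (LINT x:F -` E \<inter> space M|M. indicator (R z) x)"
      using F E by (simp add: set_integral_indicator)
    finally show "(LINT x:E|M. \<Sum>j\<in>J. c * indicator (R j) x)
        = (LINT x:F -` E \<inter> space M|M. indicator (R z) x)" .
  qed
qed

lemma is_PF_image_sum:
  assumes F: "F \<in> measurable M M"
    and psi: "\<And>i. i \<in> I \<Longrightarrow> integrable M (psi i)"
    and image: "\<And>i. i \<in> I \<Longrightarrow> is_PF_image M F (psi i) (phi i)"
  shows "is_PF_image M F (\<lambda>x. \<Sum>i\<in>I. c i * psi i x) (\<lambda>x. \<Sum>i\<in>I. c i * phi i x)"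
  unfolding is_PF_image_def
proof (intro conjI ballI)
  have phi: "integrable M (phi i)" if "i \<in> I" for i
    using image[OF that] by (simp add: is_PF_image_def)
  then show "integrable M (\<lambda>x. \<Sum>i\<in>I. c i * phi i x)"
    by auto
  fix E assume E: "E \<in> sets M"
  have preimage: "F -` E \<inter> space M \<in> sets M"
    using F E by auto
  have set_integrable: "set_integrable M S (\<lambda>x. c i * h x)" if "S \<in> sets M" "integrable M h" for S h i
    unfolding set_integrable_def using that by (intro integrable_mult_indicator integrable_mult_right)
  have "(LINT x:E|M. \<Sum>i\<in>I. c i * phi i x) = (\<Sum>i\<in>I. c i * (LINT x:E|M. phi i x))"
    using E phi by (simp add: set_integral_sum set_integrable)
  also have "\<dots> = (\<Sum>i\<in>I. c i * (LINT x:F -` E \<inter> space M|M. psi i x))"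
    using image E by (auto simp: is_PF_image_def)
  also have "\<dots> = (LINT x:F -` E \<inter> space M|M. \<Sum>i\<in>I. c i * psi i x)"
    using preimage psi by (simp add: set_integral_sum set_integrable)
  finally show "(LINT x:E|M. \<Sum>i\<in>I. c i * phi i x)
      = (LINT x:F -` E \<inter> space M|M. \<Sum>i\<in>I. c i * psi i x)" .
qed

lemma chi_span_zero: "(\<lambda>_. 0) \<in> chi_span R"
  unfolding chi_span_def by (rule CollectI, rule exI[of _ "{}"]) auto

lemma chi_span_add:
  assumes "\<phi> \<in> chi_span R" "\<psi> \<in> chi_span R"
  shows "(\<lambda>x. \<phi> x + \<psi> x) \<in> chi_span R"
proof -
  obtain I c J d where I: "finite I" "\<phi> = (\<lambda>x. \<Sum>i\<in>I. c i * indicator (R i) x)"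
    and J: "finite J" "\<psi> = (\<lambda>x. \<Sum>i\<in>J. d i * indicator (R i) x)"
    using assms unfolding chi_span_def by blast
  define e where "e i = (if i \<in> I then c i else 0) + (if i \<in> J then d i else 0)" for i
  have "\<phi> x + \<psi> x = (\<Sum>i\<in>I \<union> J. e i * indicator (R i) x)" for x
  proof -
    have "(\<Sum>i\<in>I \<union> J. e i * indicator (R i) x)
        = (\<Sum>i\<in>I \<union> J. if i \<in> I then c i * indicator (R i) x else 0)
          + (\<Sum>i\<in>I \<union> J. if i \<in> J then d i * indicator (R i) x else 0)"
      unfolding e_def sum.distrib[symmetric] by (rule sum.cong) (auto simp: distrib_right)
    also have "\<dots> = (\<Sum>i\<in>I. c i * indicator (R i) x) + (\<Sum>i\<in>J. d i * indicator (R i) x)"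
      using I(1) J(1) by (simp only: sum.inter_restrict[symmetric] finite_Un) (simp add: Int_absorb1)
    finally show ?thesis
      using I(2) J(2) by simp
  qed
  then show ?thesis
    using I(1) J(1) unfolding chi_span_def by (auto intro!: exI[of _ "I \<union> J"] exI[of _ e])
qed

lemma chi_span_scale:
  assumes "\<phi> \<in> chi_span R"
  shows "(\<lambda>x. a * \<phi> x) \<in> chi_span R"
proof -
  obtain I c where "finite I" "\<phi> = (\<lambda>x. \<Sum>i\<in>I. c i * indicator (R i) x)"
    using assms unfolding chi_span_def by blast
  then have "finite I \<and> (\<lambda>x. a * \<phi> x) = (\<lambda>x. \<Sum>i\<in>I. (a * c i) * indicator (R i) x)"
    by (simp only: sum_distrib_left mult.assoc)
  then show ?thesis
    unfolding chi_span_def by (auto intro!: exI[of _ I] exI[of _ "\<lambda>i. a * c i"])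
qed

lemma chi_span_sum:
  assumes "\<And>i. i \<in> I \<Longrightarrow> \<phi> i \<in> chi_span R"
  shows "(\<lambda>x. \<Sum>i\<in>I. c i * \<phi> i x) \<in> chi_span R"
  using assms
proof (induction I rule: infinite_finite_induct)
  case (insert i I)
  then have "(\<lambda>x. c i * \<phi> i x + (\<Sum>i\<in>I. c i * \<phi> i x)) \<in> chi_span R"
    by (intro chi_span_add chi_span_scale) simp_all
  with insert.hyps show ?case
    by simp
qed (simp_all add: chi_span_zero)

theorem mainTheorem7:
  fixes M :: "'a measure" and A :: "nat \<Rightarrow> nat \<Rightarrow> real"
    and f :: "nat \<Rightarrow> 'a \<Rightarrow> 'a" and D R :: "nat \<Rightarrow> 'a set" and F :: "'a \<Rightarrow> 'a"
    and b :: "nat \<Rightarrow> real"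
  assumes A01: "\<forall>i j. A i j \<in> {0, 1}"
    and Arows: "\<forall>i. finite {j. A i j = 1}"
    and sf: "sigma_finite_measure M"
    and bs: "A_branching_system M A f D R F"
    and Rfin: "\<forall>i. emeasure M (R i) < \<infinity>"
    and bpos: "\<forall>i. b i > 0"
    and Phi: "\<forall>i. is_RN_deriv_on M (f i) (D i) (\<lambda>_. ennreal (b i))"
  shows "(\<forall>\<psi>\<in>chi_span R. \<exists>\<phi>\<in>chi_span R. is_PF_image M F \<psi> \<phi>) \<and>
         (\<forall>z. is_PF_image M F (indicator (R z))
                (\<lambda>x. \<Sum>j\<in>{j. A z j = 1}. (A z j * b z) * indicator (R j) x))"
proof -
  \<comment> \<open>\<open>A01\<close> and \<open>sf\<close> are not used: only the entries \<open>A z j = 1\<close> matter, and every set whose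
    measure is taken has finite measure.\<close>
  define column where "column z = (\<lambda>x. \<Sum>j\<in>{j. A z j = 1}. (A z j * b z) * indicator (R j) x)" for z
  have column_image: "is_PF_image M F (indicator (R z)) (column z)" for z
  proof -
    have "column z = (\<lambda>x. \<Sum>j\<in>{j. A z j = 1}. b z * indicator (R j) x)"
      unfolding column_def by (auto intro!: sum.cong)
    then show ?thesis
      using is_PF_image_indicator_range[OF bs] Arows Rfin bpos Phi by (simp add: less_imp_le)
  qed
  have column_span: "column z \<in> chi_span R" for z
    using Arows unfolding column_def chi_span_def
    by (auto intro!: exI[of _ "{j. A z j = 1}"] exI[of _ "\<lambda>j. A z j * b z"])
  have "\<exists>\<phi>\<in>chi_span R. is_PF_image M F \<psi> \<phi>" if "\<psi> \<in> chi_span R" for \<psi>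
  proof -
    obtain I c where \<psi>: "\<psi> = (\<lambda>x. \<Sum>i\<in>I. c i * indicator (R i) x)"
      using \<open>\<psi> \<in> chi_span R\<close> unfolding chi_span_def by blast
    have "is_PF_image M F \<psi> (\<lambda>x. \<Sum>i\<in>I. c i * column i x)"
      unfolding \<psi> using bs Rfin column_image
      by (intro is_PF_image_sum) (auto simp: A_branching_system_def nonsingular_def)
    then show ?thesis
      using chi_span_sum[where \<phi> = column and I = I and c = c] column_span by blast
  qed
  then show ?thesis
    using column_image by (simp add: column_def)
qed

end
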